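(* Assume (A2), (A3), (A4) and (A7) below, and suppose the training sequence $(S_n)_{n\ge1}$ satisfies infill asymptotics with respect to $(S^*_m)_{m=1}^M$. Let $(a_t)_{t\ge1}$ be any sequence of positive numbers with $a_t\to0$, and let $(k_N)_{N\ge1}$ be the adaptive number-of-neighbors sequence built from $(a_t)$. Then the estimator $\hat\beta_N=\tau(\Psi^{N,k_N}Y_{1:N})$ converges in probability to $\beta^*$ as $N\to\infty$.
   Context: Setting: $(\mathcal S,d)$ is a metric space. Fix $M\in\mathbb N$ and target locations $S^*_1,\dots,S^*_M\in\mathcal S$. There is a deterministic map $\chi:\mathcal S\to\mathbb R^P$; the target covariates are $X^*_m=\chi(S^*_m)\in\mathbb R^P$. Training locations form a deterministic sequence $(S_n)_{n\ge1}$ in $\mathcal S$, with covariates $X_n=\chi(S_n)$ and real-valued random responses $Y_n$; $Y_{1:N}=(Y_1,\dots,Y_N)$. The unobserved target responses $Y^*_m$ are real random variables. (A2) There is $f:\mathcal S\to\mathbb R$ with $\mathbb E[Y_n]=f(S_n)$ for all $n$ and $\mathbb E[Y^*_m]=f(S^*_m)$ for all $m$, and all the $Y_n$ and $Y^*_m$ are mutually independent. Write $\mu^*=(f(S^*_1),\dots,f(S^*_M))\in\mathbb R^M$. (A3) $f$ is $L$-Lipschitz: $|f(s)-f(s')|\le L\,d(s,s')$. (A4) There is $\rho^2:\mathcal S\to[0,B_Y]$ with $\mathrm{Var}(Y_n)=\rho^2(S_n)$ and $\mathrm{Var}(Y^*_m)=\rho^2(S^*_m)$. GLM: $\kappa:\mathbb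 R\to\mathbb R$ is the convex, infinitely differentiable cumulant function of a natural exponential family (model density $c(y)\exp(\theta y-\kappa(\theta))$, $\theta=x^\top\beta$). Define $\ell^*(\beta)=\sum_{m=1}^M\big[(X^*_m)^\top\beta\, f(S^*_m)-\kappa((X^*_m)^\top\beta)\big]$ (the expected target log-likelihood up to a constant) and $\beta^*=\arg\max_{\beta\in\mathbb R^P}\ell^*(\beta)$. (A7) A maximizer $\beta^*$ exists and $\ell^*$ is strictly concave on an open neighborhood of $\beta^*$. For $A\in\mathbb R^M$, $\tau(A)\in\mathbb R^P$ denotes the (unique, where it exists) maximizer of $\beta\mapsto\sum_{m=1}^M (X^*_m)^\top\beta\,A_m-\kappa((X^*_m)^\top\beta)$; thus $\tau(\mu^* )=\beta^*$. Infill asymptotics: for every $m$ and every open set $U\ni S^*_m$, infinitely many $n$ satisfy $S_n\in U$. Nearest-neighbor weight matrix $\Psi^{N,k}\in\mathbb R^{M\times N}$: $\Psi^{N,k}_{mn}=1/k$ if $S_n$ is among the $k$ training locations in $\{S_1,\dots,S_N\}$ closest to $S^*_m$, and $0$ otherwise; ties are broken uniformly at random, independently of the responses. Adaptive number of neighbors: for $t\le N$ let $R_{N,t}=\max_{1\le m\le M}\max\{d(S^*_m,S_n): n\le N,\ S_n \text{ is among the } t \text{ nearest neighbors of } S^*_m \text{ in } \{S_1,\dots,S_N\}\}$. Given $(a_t)$, set $k_1=1$ and $k_{N+1}=k_N+1$ if $R_{N+1,k_N+1}\le a_{k_N}$, and $k_{N+1}=k_N$ otherwise. *)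

theory Defs
  imports "HOL-Probability.Probability"
begin

definition strictly_concave_on :: "'a::real_vector set \<Rightarrow> ('a \<Rightarrow> real) \<Rightarrow> bool" where
  "strictly_concave_on U g \<longleftrightarrow> convex U \<and>
     (\<forall>x\<in>U. \<forall>y\<in>U. x \<noteq> y \<longrightarrow> (\<forall>t::real. 0 < t \<and> t < 1 \<longrightarrow>
        (1 - t) * g x + t * g y < g ((1 - t) *\<^sub>R x + t *\<^sub>R y)))"

definition glm_obj :: "(real \<Rightarrow> real) \<Rightarrow> nat \<Rightarrow> (nat \<Rightarrow> real ^ 'p) \<Rightarrow> (nat \<Rightarrow> real) \<Rightarrow> real ^ 'p \<Rightarrow> real" where
  "glm_obj \<kappa> M Xs A \<beta> = (\<Sum>m<M. (Xs m \<bullet> \<beta>) * A m - \<kappa> (Xs m \<bullet> \<beta>))"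

text \<open>tau(A): the unique maximiser (arbitrary value if there is no unique maximiser).\<close>
definition tau :: "(real \<Rightarrow> real) \<Rightarrow> nat \<Rightarrow> (nat \<Rightarrow> real ^ 'p) \<Rightarrow> (nat \<Rightarrow> real) \<Rightarrow> real ^ 'p" where
  "tau \<kappa> M Xs A = (THE \<beta>. \<forall>\<beta>'. glm_obj \<kappa> M Xs A \<beta>' \<le> glm_obj \<kappa> M Xs A \<beta>)"

text \<open>Paper's R_{N,t}: the largest distance from a target to one of its t nearest
  neighbours among S_1..S_N (independent of tie-breaking). A training index n is among
  the t nearest neighbours of s (for some tie-breaking) iff fewer than t training points
  are strictly closer.\<close>
definition R_nn :: "(nat \<Rightarrow> 's::metric_space) \<Rightarrow> nat \<Rightarrow> (nat \<Rightarrow> 's) \<Rightarrow> nat \<Rightarrow> nat \<Rightarrow> real" where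
  "R_nn S M Sstar N t = Max (\<Union>m\<in>{..<M}.
      {dist (Sstar m) (S n) | n. n \<in> {1..N} \<and>
         card {j\<in>{1..N}. dist (Sstar m) (S j) < dist (Sstar m) (S n)} < t})"

text \<open>Adaptive number of neighbours: kseq ... N = k_N for N \<ge> 1 (k_1 = 1).\<close>
fun kseq :: "(nat \<Rightarrow> 's::metric_space) \<Rightarrow> nat \<Rightarrow> (nat \<Rightarrow> 's) \<Rightarrow> (nat \<Rightarrow> real) \<Rightarrow> nat \<Rightarrow> nat" where
  "kseq S M Sstar a 0 = 1"
| "kseq S M Sstar a (Suc N) =
     (if N = 0 then 1
      else if R_nn S M Sstar (Suc N) (kseq S M Sstar a N + 1) \<le> a (kseq S M Sstar a N)
           then kseq S M Sstar a N + 1 else kseq S M Sstar a N)"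

definition nn_before :: "(nat \<Rightarrow> 's::metric_space) \<Rightarrow> (nat \<Rightarrow> real) \<Rightarrow> 's \<Rightarrow> nat \<Rightarrow> nat \<Rightarrow> bool" where
  "nn_before S u s j n \<longleftrightarrow> dist s (S j) < dist s (S n) \<or>
     (dist s (S j) = dist s (S n) \<and> (u j < u n \<or> (u j = u n \<and> j < n)))"

definition nn_set :: "(nat \<Rightarrow> 's::metric_space) \<Rightarrow> (nat \<Rightarrow> real) \<Rightarrow> 's \<Rightarrow> nat \<Rightarrow> nat \<Rightarrow> nat set" where
  "nn_set S u s N k = {n\<in>{1..N}. card {j\<in>{1..N}. nn_before S u s j n} < k}"

definition nn_avg :: "(nat \<Rightarrow> 's::metric_space) \<Rightarrow> (nat \<Rightarrow> real) \<Rightarrow> (nat \<Rightarrow> 's) \<Rightarrow> nat \<Rightarrow> nat \<Rightarrow> (nat \<Rightarrow> real) \<Rightarrow> nat \<Rightarrow> real" where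
  "nn_avg S u Sstar N k y m = (\<Sum>n\<in>nn_set S u (Sstar m) N k. y n) / real k"

end

theory Submission
  imports Defs
begin

text \<open>
  Concavity of the expected log-likelihood everywhere and strict concavity near \<open>\<beta>*\<close> make the
  maximiser \<open>\<tau>\<close> stable: there is \<open>\<theta> > 0\<close> such that \<open>\<tau>(A)\<close> is within \<open>\<epsilon>\<close> of \<open>\<beta>*\<close> whenever every
  \<open>A\<^sub>m\<close> is within \<open>\<theta>\<close> of \<open>f(S*\<^sub>m)\<close>.  Infill asymptotics drive the adaptive \<open>k\<^sub>N\<close> to infinity while
  all \<open>k\<^sub>N\<close> nearest neighbours of every target eventually lie within any prescribed radius, so by
  the Lipschitz bound the bias of each neighbour average is at most \<open>\<theta>/2\<close>.  The labels that select
  the neighbours are independent of the responses, so given the selected set the centred sum of the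
  \<open>k\<^sub>N\<close> responses obeys Chebyshev's inequality with variance at most \<open>k\<^sub>N B\<^sub>Y\<close>; over the \<open>M\<close>
  targets the probability of a deviation beyond \<open>\<theta>/2\<close> is at most \<open>4 M B\<^sub>Y / (k\<^sub>N \<theta>\<^sup>2) \<rightarrow> 0\<close>.
\<close>

section \<open>Stability of the maximiser\<close>

lemma glm_obj_perturb:
  "glm_obj \<kappa> M Xs A \<beta> = glm_obj \<kappa> M Xs \<mu> \<beta> + (\<Sum>m<M. (Xs m \<bullet> \<beta>) * (A m - \<mu> m))"
  unfolding glm_obj_def by (simp add: sum.distrib[symmetric] sum_subtractf[symmetric] algebra_simps)

lemma linear_glm_perturbation: "linear (\<lambda>\<beta>. \<Sum>m<M. (Xs m \<bullet> \<beta>) * c m)"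
  by (intro linear_compose_sum ballI linearI) (auto simp: inner_add_right algebra_simps)

lemma abs_glm_perturbation_le:
  assumes "\<And>m. m < M \<Longrightarrow> \<bar>c m\<bar> \<le> \<theta>" and "\<beta> \<in> cball \<beta>0 r"
  shows "\<bar>\<Sum>m<M. (Xs m \<bullet> \<beta>) * c m\<bar> \<le> (\<Sum>m<M. norm (Xs m)) * (norm \<beta>0 + r) * \<theta>"
proof -
  have "norm \<beta> \<le> norm \<beta>0 + r"
    using assms(2) norm_triangle_ineq2[of \<beta> \<beta>0] by (simp add: dist_norm norm_minus_commute)
  have "\<bar>\<Sum>m<M. (Xs m \<bullet> \<beta>) * c m\<bar> \<le> (\<Sum>m<M. \<bar>Xs m \<bullet> \<beta>\<bar> * \<bar>c m\<bar>)"
    unfolding abs_mult[symmetric] by (rule sum_abs)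
  also have "\<dots> \<le> (\<Sum>m<M. norm (Xs m) * (norm \<beta>0 + r) * \<theta>)"
  proof (rule sum_mono)
    fix m assume "m \<in> {..<M}"
    have "\<bar>Xs m \<bullet> \<beta>\<bar> \<le> norm (Xs m) * (norm \<beta>0 + r)"
      using order_trans[OF Cauchy_Schwarz_ineq2 mult_left_mono[OF \<open>norm \<beta> \<le> norm \<beta>0 + r\<close> norm_ge_zero]] .
    then show "\<bar>Xs m \<bullet> \<beta>\<bar> * \<bar>c m\<bar> \<le> norm (Xs m) * (norm \<beta>0 + r) * \<theta>"
      using assms(1) \<open>m \<in> {..<M}\<close> by (intro mult_mono) auto
  qed
  finally show ?thesis by (simp add: sum_distrib_right)
qed

lemma concave_on_glm_obj:
  assumes "convex_on UNIV \<kappa>"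
  shows "concave_on UNIV (glm_obj \<kappa> M Xs A)"
  unfolding concave_on_iff
proof (intro conjI ballI allI impI)
  fix x y and u v :: real
  assume uv: "0 \<le> u" "0 \<le> v" "u + v = 1"
  have u: "u = 1 - v" using uv(3) by simp
  have kappa_convex: "\<kappa> (u * (Xs m \<bullet> x) + v * (Xs m \<bullet> y)) \<le> u * \<kappa> (Xs m \<bullet> x) + v * \<kappa> (Xs m \<bullet> y)" for m
    using convex_onD[OF assms, of v "Xs m \<bullet> x" "Xs m \<bullet> y"] uv unfolding u by simp
  have "(\<Sum>m<M. (u * (Xs m \<bullet> x) + v * (Xs m \<bullet> y)) * A m - (u * \<kappa> (Xs m \<bullet> x) + v * \<kappa> (Xs m \<bullet> y)))
      \<le> (\<Sum>m<M. (u * (Xs m \<bullet> x) + v * (Xs m \<bullet> y)) * A m - \<kappa> (u * (Xs m \<bullet> x) + v * (Xs m \<bullet> y)))"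
    by (rule sum_mono, rule diff_left_mono, rule kappa_convex)
  then show "u * glm_obj \<kappa> M Xs A x + v * glm_obj \<kappa> M Xs A y \<le> glm_obj \<kappa> M Xs A (u *\<^sub>R x + v *\<^sub>R y)"
    unfolding glm_obj_def
    by (simp add: inner_add_right sum_distrib_left sum.distrib[symmetric] sum_subtractf[symmetric] algebra_simps)
qed simp

lemma continuous_on_glm_obj:
  assumes "continuous_on UNIV \<kappa>"
  shows "continuous_on S (glm_obj \<kappa> M Xs A)"
proof -
  have "continuous_on S (\<lambda>\<beta>. \<kappa> (Xs m \<bullet> \<beta>))" for m
    by (rule continuous_on_compose2[OF assms]) (auto intro!: continuous_intros)
  then show ?thesis
    unfolding glm_obj_def[abs_def] by (intro continuous_intros)
qed

lemma strictly_concave_on_subset: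
  "strictly_concave_on V g \<Longrightarrow> W \<subseteq> V \<Longrightarrow> convex W \<Longrightarrow> strictly_concave_on W g"
  unfolding strictly_concave_on_def by blast

lemma strictly_concave_on_add_linear:
  assumes "strictly_concave_on V g" "linear D"
  shows "strictly_concave_on V (\<lambda>x. g x + D x)"
proof -
  have lin: "D ((1 - t) *\<^sub>R x + t *\<^sub>R y) = (1 - t) * D x + t * D y" for t x y
    by (simp add: linear_add[OF assms(2)] linear_scale[OF assms(2)])
  show ?thesis
    unfolding strictly_concave_on_def
  proof (intro conjI ballI allI impI)
    show "convex V" using assms(1) by (simp add: strictly_concave_on_def)
    fix x y and t :: real assume "x \<in> V" "y \<in> V" "x \<noteq> y" "0 < t \<and> t < 1"
    then have "(1 - t) * g x + t * g y < g ((1 - t) *\<^sub>R x + t *\<^sub>R y)"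
      using assms(1) unfolding strictly_concave_on_def by blast
    then show "(1 - t) * (g x + D x) + t * (g y + D y)
        < g ((1 - t) *\<^sub>R x + t *\<^sub>R y) + D ((1 - t) *\<^sub>R x + t *\<^sub>R y)"
      by (simp only: lin distrib_left)
  qed
qed

lemma strictly_concave_on_midpoint:
  assumes "strictly_concave_on V g" "x \<in> V" "y \<in> V" "x \<noteq> y"
  shows "g x + g y < 2 * g ((1/2) *\<^sub>R x + (1/2) *\<^sub>R y)"
proof -
  have "\<forall>t. 0 < t \<and> t < 1 \<longrightarrow> (1 - t) * g x + t * g y < g ((1 - t) *\<^sub>R x + t *\<^sub>R y)"
    using assms unfolding strictly_concave_on_def by blast
  from this[rule_format, of "1/2"] show ?thesis by simp
qed

lemma concave_local_max_imp_strict_global_max: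
  fixes g :: "'a::real_normed_vector \<Rightarrow> real"
  assumes conc: "concave_on UNIV g" and strict: "strictly_concave_on V g"
    and ball: "ball x \<rho> \<subseteq> V" "0 < \<rho>" and max: "\<And>z. z \<in> V \<Longrightarrow> g z \<le> g x" and "y \<noteq> x"
  shows "g y < g x"
proof (rule ccontr)
  assume "\<not> g y < g x"
  then have ge: "g x \<le> g y" by simp
  have ny: "0 < norm (y - x)" using \<open>y \<noteq> x\<close> by simp
  define t where "t = min 1 (\<rho> / (2 * norm (y - x)))"
  have t: "0 < t" "t \<le> 1" using ny ball(2) by (auto simp: t_def)
  define z where "z = (1 - t) *\<^sub>R x + t *\<^sub>R y"
  have "dist x z = t * norm (y - x)"
    using t by (simp add: z_def dist_norm norm_minus_commute algebra_simps flip: scaleR_diff_right)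
  also have "\<dots> \<le> \<rho> / (2 * norm (y - x)) * norm (y - x)"
    by (intro mult_right_mono) (auto simp: t_def)
  also have "\<dots> = \<rho> / 2" using ny by simp
  finally have "z \<in> V" using ball by auto
  have "z \<noteq> x" using t \<open>y \<noteq> x\<close> by (simp add: z_def algebra_simps)
  have "(1 - t) * g x + t * g x \<le> (1 - t) * g x + t * g y"
    using ge t by (simp add: mult_left_mono)
  also have "\<dots> \<le> g z"
    using concave_onD[OF conc, of t x y] t by (simp add: z_def)
  finally have "g x \<le> g z" by (simp add: algebra_simps)
  have "x \<in> V" using ball by auto
  have "g z + g x < 2 * g ((1/2) *\<^sub>R z + (1/2) *\<^sub>R x)"
    using strictly_concave_on_midpoint[OF strict \<open>z \<in> V\<close> \<open>x \<in> V\<close> \<open>z \<noteq> x\<close>] .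
  moreover have "(1/2) *\<^sub>R z + (1/2) *\<^sub>R x \<in> V"
    using strict \<open>z \<in> V\<close> \<open>x \<in> V\<close> unfolding strictly_concave_on_def convex_def by simp
  then have "g ((1/2) *\<^sub>R z + (1/2) *\<^sub>R x) \<le> g x" by (rule max)
  ultimately show False using \<open>g x \<le> g z\<close> by linarith
qed

lemma continuous_attains_max_inside_ball:
  fixes g :: "'a::heine_borel \<Rightarrow> real"
  assumes "continuous_on (cball c r) g" "0 \<le> r" and "\<And>y. y \<in> sphere c r \<Longrightarrow> g y < g c"
  shows "\<exists>x\<in>ball c r. \<forall>y\<in>cball c r. g y \<le> g x"
proof -
  obtain x where x: "x \<in> cball c r" "\<And>y. y \<in> cball c r \<Longrightarrow> g y \<le> g x"
    using continuous_attains_sup[OF compact_cball _ assms(1)] assms(2) by auto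
  have "x \<notin> sphere c r"
  proof
    assume "x \<in> sphere c r"
    then have "g x < g c" by (rule assms(3))
    moreover have "g c \<le> g x" using x(2) assms(2) by simp
    ultimately show False by simp
  qed
  then have "x \<in> ball c r" using x(1) by (simp add: less_le)
  with x(2) show ?thesis by blast
qed

lemma concave_strict_max_inside_ball:
  fixes g :: "'a::euclidean_space \<Rightarrow> real"
  assumes "concave_on UNIV g" "continuous_on (cball c r) g" "strictly_concave_on (cball c r) g"
    and "0 \<le> r" "\<And>y. y \<in> sphere c r \<Longrightarrow> g y < g c"
  shows "\<exists>x\<in>ball c r. \<forall>y. y \<noteq> x \<longrightarrow> g y < g x"
proof -
  obtain x where x: "x \<in> ball c r" "\<And>y. y \<in> cball c r \<Longrightarrow> g y \<le> g x"
    using continuous_attains_max_inside_ball[OF assms(2,4,5)] by blast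
  have sub: "ball x (r - dist c x) \<subseteq> cball c r"
  proof
    fix z assume "z \<in> ball x (r - dist c x)"
    then show "z \<in> cball c r"
      using dist_triangle3[of c z x] dist_commute[of x c] unfolding mem_ball mem_cball by linarith
  qed
  have "0 < r - dist c x" using x(1) by simp
  then have "g y < g x" if "y \<noteq> x" for y
    by (rule concave_local_max_imp_strict_global_max[OF assms(1,3) sub _ x(2) that])
  with x(1) show ?thesis by blast
qed

lemma strictly_concave_max_gap_on_sphere:
  fixes g :: "'a::euclidean_space \<Rightarrow> real"
  assumes "continuous_on (sphere c r) g" "strictly_concave_on (cball c r) g" "0 < r"
    and max: "\<And>x. g x \<le> g c"
  obtains \<eta> where "0 < \<eta>" "\<And>x. x \<in> sphere c r \<Longrightarrow> g x + \<eta> \<le> g c"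
proof -
  have "sphere c r \<noteq> {}" using assms(3) by simp
  then obtain x1 where x1: "x1 \<in> sphere c r" "\<And>x. x \<in> sphere c r \<Longrightarrow> g x \<le> g x1"
    using continuous_attains_sup[OF compact_sphere _ assms(1)] by blast
  have "g x1 + g c < 2 * g ((1/2) *\<^sub>R x1 + (1/2) *\<^sub>R c)"
    using strictly_concave_on_midpoint[OF assms(2)] x1(1) assms(3) by auto
  moreover have "g ((1/2) *\<^sub>R x1 + (1/2) *\<^sub>R c) \<le> g c" by (rule max)
  ultimately have "0 < g c - g x1" by linarith
  moreover have "g x + (g c - g x1) \<le> g c" if "x \<in> sphere c r" for x using x1(2)[OF that] by simp
  ultimately show ?thesis using that by blast
qed

lemma tau_eqI:
  assumes "\<And>\<beta>. \<beta> \<noteq> \<beta>0 \<Longrightarrow> glm_obj \<kappa> M Xs A \<beta> < glm_obj \<kappa> M Xs A \<beta>0"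
  shows "tau \<kappa> M Xs A = \<beta>0"
  unfolding tau_def
proof (rule the_equality)
  show "\<forall>\<beta>. glm_obj \<kappa> M Xs A \<beta> \<le> glm_obj \<kappa> M Xs A \<beta>0"
    using assms by (metis order.refl order.strict_implies_order)
qed (use assms in \<open>metis not_less\<close>)

lemma tau_stable:
  fixes Xs :: "nat \<Rightarrow> real ^ 'p" and \<mu> :: "nat \<Rightarrow> real"
  assumes convex: "convex_on UNIV \<kappa>" and cont: "continuous_on UNIV \<kappa>"
    and max: "\<And>\<beta>. glm_obj \<kappa> M Xs \<mu> \<beta> \<le> glm_obj \<kappa> M Xs \<mu> \<beta>0"
    and strict: "\<exists>V. open V \<and> \<beta>0 \<in> V \<and> strictly_concave_on V (glm_obj \<kappa> M Xs \<mu>)"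
    and "0 < \<epsilon>"
  shows "\<exists>\<theta>>0. \<forall>A. (\<forall>m<M. \<bar>A m - \<mu> m\<bar> \<le> \<theta>) \<longrightarrow> dist (tau \<kappa> M Xs A) \<beta>0 < \<epsilon>"
proof -
  define g0 where "g0 = glm_obj \<kappa> M Xs \<mu>"
  obtain r where r: "0 < r" "r \<le> \<epsilon>" "strictly_concave_on (cball \<beta>0 r) g0"
  proof -
    obtain V r where "open V" "\<beta>0 \<in> V" "strictly_concave_on V g0" "0 < r" "cball \<beta>0 r \<subseteq> V"
      using strict open_contains_cball unfolding g0_def by metis
    then show ?thesis
      using that[of "min r \<epsilon>"] \<open>0 < \<epsilon>\<close> strictly_concave_on_subset[of V g0 "cball \<beta>0 (min r \<epsilon>)"] by force
  qed
  have "continuous_on (sphere \<beta>0 r) g0" unfolding g0_def by (rule continuous_on_glm_obj[OF cont])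
  then obtain \<eta> where "0 < \<eta>" and gap: "\<And>\<beta>. \<beta> \<in> sphere \<beta>0 r \<Longrightarrow> g0 \<beta> + \<eta> \<le> g0 \<beta>0"
    using strictly_concave_max_gap_on_sphere[OF _ r(3) r(1) max[folded g0_def]] by blast
  define C where "C = (\<Sum>m<M. norm (Xs m)) * (norm \<beta>0 + r) + 1"
  have "0 < C" unfolding C_def using r(1) by (intro add_nonneg_pos mult_nonneg_nonneg sum_nonneg) auto
  define \<theta> where "\<theta> = \<eta> / (4 * C)"
  have "0 < \<theta>" using \<open>0 < \<eta>\<close> \<open>0 < C\<close> by (simp add: \<theta>_def)
  show ?thesis
  proof (intro exI[of _ \<theta>] conjI allI impI)
    show "0 < \<theta>" by fact
    fix A assume A: "\<forall>m<M. \<bar>A m - \<mu> m\<bar> \<le> \<theta>"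
    txt \<open>The perturbation \<open>D\<close> is linear and smaller than \<open>\<eta>/4\<close> on the ball, so the perturbed
      objective still drops on the sphere; hence it has a strict maximiser inside the ball.\<close>
    define D where "D \<beta> = (\<Sum>m<M. (Xs m \<bullet> \<beta>) * (A m - \<mu> m))" for \<beta>
    define g where "g = glm_obj \<kappa> M Xs A"
    have g: "g = (\<lambda>\<beta>. g0 \<beta> + D \<beta>)"
      unfolding g_def g0_def D_def by (simp add: glm_obj_perturb[of _ _ _ A _ \<mu>] fun_eq_iff)
    have D: "4 * \<bar>D \<beta>\<bar> \<le> \<eta>" if "\<beta> \<in> cball \<beta>0 r" for \<beta>
    proof -
      have "\<bar>D \<beta>\<bar> \<le> (\<Sum>m<M. norm (Xs m)) * (norm \<beta>0 + r) * \<theta>"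
        unfolding D_def using A that by (intro abs_glm_perturbation_le) simp_all
      also have "\<dots> \<le> C * \<theta>" using \<open>0 < \<theta>\<close> by (simp add: C_def)
      finally show ?thesis using \<open>0 < C\<close> by (simp add: \<theta>_def)
    qed
    have conc: "concave_on UNIV g" unfolding g_def by (rule concave_on_glm_obj[OF convex])
    have cont_g: "continuous_on (cball \<beta>0 r) g" unfolding g_def by (rule continuous_on_glm_obj[OF cont])
    have strict_g: "strictly_concave_on (cball \<beta>0 r) g"
      unfolding g D_def by (rule strictly_concave_on_add_linear[OF r(3) linear_glm_perturbation])
    have sphere: "g \<beta> < g \<beta>0" if "\<beta> \<in> sphere \<beta>0 r" for \<beta>
      using D[of \<beta>] D[of \<beta>0] gap[OF that] that r(1) \<open>0 < \<eta>\<close> unfolding g by simp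
    have "0 \<le> r" using r(1) by simp
    then obtain \<beta>2 where \<beta>2: "\<beta>2 \<in> ball \<beta>0 r" "\<And>\<beta>. \<beta> \<noteq> \<beta>2 \<Longrightarrow> g \<beta> < g \<beta>2"
      using concave_strict_max_inside_ball[OF conc cont_g strict_g _ sphere] by blast
    have "tau \<kappa> M Xs A = \<beta>2" by (rule tau_eqI[OF \<beta>2(2)[unfolded g_def]])
    with \<beta>2(1) r(2) show "dist (tau \<kappa> M Xs A) \<beta>0 < \<epsilon>" by (simp add: dist_commute)
  qed
qed

section \<open>Neighbour counts and the adaptive number of neighbours\<close>

definition enough_neighbours :: "(nat \<Rightarrow> 's::metric_space) \<Rightarrow> nat \<Rightarrow> (nat \<Rightarrow> 's) \<Rightarrow> nat \<Rightarrow> nat \<Rightarrow> real \<Rightarrow> bool" where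
  "enough_neighbours S M Sstar N t r \<longleftrightarrow> (\<forall>m<M. t \<le> card {j\<in>{1..N}. dist (Sstar m) (S j) \<le> r})"

lemma enough_neighbours_mono:
  assumes "enough_neighbours S M Sstar N t r" "N \<le> N'" "r \<le> r'" "t' \<le> t"
  shows "enough_neighbours S M Sstar N' t' r'"
  unfolding enough_neighbours_def
proof (intro allI impI)
  fix m assume "m < M"
  then have "t \<le> card {j\<in>{1..N}. dist (Sstar m) (S j) \<le> r}"
    using assms(1) by (simp add: enough_neighbours_def)
  also have "\<dots> \<le> card {j\<in>{1..N'}. dist (Sstar m) (S j) \<le> r'}"
    using assms(2,3) by (intro card_mono) auto
  finally show "t' \<le> card {j\<in>{1..N'}. dist (Sstar m) (S j) \<le> r'}" using assms(4) by simp
qed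

lemma enough_neighbours_imp_dist_le:
  assumes "enough_neighbours S M Sstar N t r" "m < M"
    and "card {j\<in>{1..N}. dist (Sstar m) (S j) < dist (Sstar m) (S n)} < t"
  shows "dist (Sstar m) (S n) \<le> r"
proof (rule ccontr)
  assume "\<not> ?thesis"
  then have "card {j\<in>{1..N}. dist (Sstar m) (S j) \<le> r}
      \<le> card {j\<in>{1..N}. dist (Sstar m) (S j) < dist (Sstar m) (S n)}"
    by (intro card_mono) auto
  with assms show False by (auto simp: enough_neighbours_def)
qed

lemma nearest_beyond_radius:
  fixes S :: "nat \<Rightarrow> 's::metric_space"
  assumes "card {j\<in>{1..N}. dist s (S j) \<le> r} < t" "t \<le> N"
  obtains n where "n \<in> {1..N}" "r < dist s (S n)"
    "card {j\<in>{1..N}. dist s (S j) < dist s (S n)} < t"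
proof -
  define G where "G = {j\<in>{1..N}. r < dist s (S j)}"
  have "N = card {1..N}" by simp
  also have "\<dots> \<le> card (G \<union> {j\<in>{1..N}. dist s (S j) \<le> r})"
    by (intro card_mono) (auto simp: G_def)
  also have "\<dots> \<le> card G + card {j\<in>{1..N}. dist s (S j) \<le> r}" by (rule card_Un_le)
  finally have "N \<le> card G + card {j\<in>{1..N}. dist s (S j) \<le> r}" .
  then have "card G \<noteq> 0" using assms by linarith
  then have "G \<noteq> {}" by auto
  have "finite G" by (simp add: G_def)
  define n where "n = arg_min_on (\<lambda>j. dist s (S j)) G"
  have "n \<in> G" unfolding n_def using \<open>finite G\<close> \<open>G \<noteq> {}\<close> by (rule arg_min_if_finite(1))
  have nearest: "dist s (S n) \<le> dist s (S j)" if "j \<in> G" for j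
    using arg_min_if_finite(2)[OF \<open>finite G\<close> \<open>G \<noteq> {}\<close>, of "\<lambda>j. dist s (S j)"] that
    unfolding n_def by (simp add: not_less)
  have closer: "{j\<in>{1..N}. dist s (S j) < dist s (S n)} \<subseteq> {j\<in>{1..N}. dist s (S j) \<le> r}"
  proof (intro subsetI CollectI conjI)
    fix j assume j: "j \<in> {j\<in>{1..N}. dist s (S j) < dist s (S n)}"
    then show "j \<in> {1..N}" by simp
    show "dist s (S j) \<le> r"
    proof (rule ccontr)
      assume "\<not> dist s (S j) \<le> r"
      then have "j \<in> G" using j by (simp add: G_def)
      then show False using nearest[of j] j by simp
    qed
  qed
  have "card {j\<in>{1..N}. dist s (S j) < dist s (S n)} \<le> card {j\<in>{1..N}. dist s (S j) \<le> r}"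
    by (rule card_mono[OF finite_subset[OF _ finite_atLeastAtMost[of 1 N]] closer]) blast
  then have "card {j\<in>{1..N}. dist s (S j) < dist s (S n)} < t" using assms(1) by linarith
  moreover have "n \<in> {1..N}" "r < dist s (S n)" using \<open>n \<in> G\<close> by (simp_all add: G_def)
  ultimately show ?thesis using that by blast
qed

lemma R_nn_le_iff:
  assumes "0 < M" "1 \<le> t" "t \<le> N"
  shows "R_nn S M Sstar N t \<le> r \<longleftrightarrow> enough_neighbours S M Sstar N t r"
proof -
  define D where "D = (\<Union>m\<in>{..<M}. {dist (Sstar m) (S n) | n. n \<in> {1..N} \<and>
      card {j\<in>{1..N}. dist (Sstar m) (S j) < dist (Sstar m) (S n)} < t})"
  have "finite D"
    unfolding D_def
  proof (intro finite_UN_I)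
    fix m
    show "finite {dist (Sstar m) (S n) | n. n \<in> {1..N} \<and>
        card {j\<in>{1..N}. dist (Sstar m) (S j) < dist (Sstar m) (S n)} < t}"
      by (rule finite_subset[of _ "(\<lambda>n. dist (Sstar m) (S n)) ` {1..N}"]) blast+
  qed simp
  have "D \<noteq> {}"
  proof -
    have "-1 < dist (Sstar 0) (S j)" for j by (rule less_le_trans[OF _ zero_le_dist]) simp
    then have empty: "{j\<in>{1..N}. dist (Sstar 0) (S j) \<le> -1} = {}" by (simp add: not_le)
    have "card {j\<in>{1..N}. dist (Sstar 0) (S j) \<le> -1} < t" unfolding empty using assms(2) by simp
    then obtain n where "n \<in> {1..N}"
        "card {j\<in>{1..N}. dist (Sstar 0) (S j) < dist (Sstar 0) (S n)} < t"
      using nearest_beyond_radius[OF _ assms(3)] by blast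
    then have "dist (Sstar 0) (S n) \<in> D" unfolding D_def using assms(1) by blast
    then show ?thesis by blast
  qed
  have "R_nn S M Sstar N t \<le> r \<longleftrightarrow> (\<forall>d\<in>D. d \<le> r)"
    unfolding R_nn_def D_def[symmetric] using \<open>finite D\<close> \<open>D \<noteq> {}\<close> by (rule Max_le_iff)
  also have "\<dots> \<longleftrightarrow> enough_neighbours S M Sstar N t r"
  proof
    assume "\<forall>d\<in>D. d \<le> r"
    show "enough_neighbours S M Sstar N t r"
      unfolding enough_neighbours_def
    proof (intro allI impI leI notI)
      fix m assume "m < M" and few: "card {j\<in>{1..N}. dist (Sstar m) (S j) \<le> r} < t"
      obtain n where "n \<in> {1..N}" "r < dist (Sstar m) (S n)"
          "card {j\<in>{1..N}. dist (Sstar m) (S j) < dist (Sstar m) (S n)} < t"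
        using nearest_beyond_radius[OF few assms(3)] by blast
      then have "dist (Sstar m) (S n) \<in> D" unfolding D_def using \<open>m < M\<close> by blast
      with \<open>\<forall>d\<in>D. d \<le> r\<close> have "dist (Sstar m) (S n) \<le> r" by blast
      with \<open>r < dist (Sstar m) (S n)\<close> show False by simp
    qed
  next
    assume enough: "enough_neighbours S M Sstar N t r"
    show "\<forall>d\<in>D. d \<le> r"
    proof
      fix d assume "d \<in> D"
      then obtain m n where "m < M" "d = dist (Sstar m) (S n)"
          "card {j\<in>{1..N}. dist (Sstar m) (S j) < dist (Sstar m) (S n)} < t"
        unfolding D_def by blast
      then show "d \<le> r" using enough_neighbours_imp_dist_le[OF enough] by blast
    qed
  qed
  finally show ?thesis .
qed

lemma kseq_ge_1: "1 \<le> kseq S M Sstar a N"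
  by (induction N) auto

lemma kseq_le: "1 \<le> N \<Longrightarrow> kseq S M Sstar a N \<le> N"
  by (induction N) auto

lemma incseq_kseq: "incseq (kseq S M Sstar a)"
proof (rule incseq_SucI)
  show "kseq S M Sstar a N \<le> kseq S M Sstar a (Suc N)" for N by (cases N) auto
qed

lemma kseq_Suc_eq_if_enough_neighbours:
  assumes "0 < M" "1 \<le> N"
    and "enough_neighbours S M Sstar (Suc N) (kseq S M Sstar a N + 1) (a (kseq S M Sstar a N))"
  shows "kseq S M Sstar a (Suc N) = kseq S M Sstar a N + 1"
proof -
  have "R_nn S M Sstar (Suc N) (kseq S M Sstar a N + 1) \<le> a (kseq S M Sstar a N)"
    using assms kseq_le[OF assms(2), of S M Sstar a] by (subst R_nn_le_iff) auto
  then show ?thesis using assms(2) by simp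
qed

lemma kseq_enough_neighbours:
  assumes "0 < M"
  shows "1 \<le> N \<Longrightarrow> 2 \<le> kseq S M Sstar a N \<Longrightarrow>
    enough_neighbours S M Sstar N (kseq S M Sstar a N) (a (kseq S M Sstar a N - 1))"
proof (induction N)
  case 0
  then show ?case by simp
next
  case (Suc N)
  let ?k = "kseq S M Sstar a N"
  have "N \<noteq> 0" using Suc.prems(2) by (cases N) auto
  show ?case
  proof (cases "R_nn S M Sstar (Suc N) (?k + 1) \<le> a ?k")
    case True
    have "?k + 1 \<le> Suc N" using kseq_le[of N] \<open>N \<noteq> 0\<close> by simp
    then have "enough_neighbours S M Sstar (Suc N) (?k + 1) (a ?k)"
      using True assms by (subst (asm) R_nn_le_iff) auto
    then show ?thesis using True \<open>N \<noteq> 0\<close> by simp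
  next
    case False
    then have k: "kseq S M Sstar a (Suc N) = ?k" using \<open>N \<noteq> 0\<close> by simp
    then have "enough_neighbours S M Sstar N ?k (a (?k - 1))"
      using Suc \<open>N \<noteq> 0\<close> by simp
    then show ?thesis unfolding k by (rule enough_neighbours_mono) auto
  qed
qed

lemma eventually_enough_neighbours:
  assumes infill: "\<And>m V. m < M \<Longrightarrow> open V \<Longrightarrow> Sstar m \<in> V \<Longrightarrow> infinite {n. n \<ge> 1 \<and> S n \<in> V}"
    and "0 < r"
  shows "\<forall>\<^sub>F N in sequentially. enough_neighbours S M Sstar N t r"
proof -
  have "\<forall>\<^sub>F N in sequentially. t \<le> card {j\<in>{1..N}. dist (Sstar m) (S j) \<le> r}" if "m < M" for m
  proof -
    have "infinite {n. n \<ge> 1 \<and> S n \<in> ball (Sstar m) r}"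
      using \<open>0 < r\<close> by (intro infill[OF that]) auto
    then obtain B where B: "finite B" "card B = t" "B \<subseteq> {n. n \<ge> 1 \<and> S n \<in> ball (Sstar m) r}"
      using infinite_arbitrarily_large by blast
    show ?thesis
    proof (rule eventually_sequentiallyI)
      fix N assume "Max (insert 0 B) \<le> N"
      then have "B \<subseteq> {j\<in>{1..N}. dist (Sstar m) (S j) \<le> r}"
        using B(1,3) Max_ge[of "insert 0 B"] by fastforce
      then show "t \<le> card {j\<in>{1..N}. dist (Sstar m) (S j) \<le> r}"
        using card_mono[of _ B] B(2) by simp
    qed
  qed
  then have "\<forall>\<^sub>F N in sequentially. \<forall>m\<in>{..<M}. t \<le> card {j\<in>{1..N}. dist (Sstar m) (S j) \<le> r}"
    by (intro eventually_ball_finite) auto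
  then show ?thesis unfolding enough_neighbours_def by (rule eventually_mono) simp
qed

lemma filterlim_kseq_at_top:
  assumes "0 < M"
    and infill: "\<And>m V. m < M \<Longrightarrow> open V \<Longrightarrow> Sstar m \<in> V \<Longrightarrow> infinite {n. n \<ge> 1 \<and> S n \<in> V}"
    and a_pos: "\<And>t. t \<ge> 1 \<Longrightarrow> a t > 0"
  shows "filterlim (kseq S M Sstar a) at_top sequentially"
  unfolding filterlim_at_top
proof
  fix K
  show "\<forall>\<^sub>F N in sequentially. K \<le> kseq S M Sstar a N"
  proof (induction K)
    case 0
    show ?case by simp
  next
    case (Suc K)
    show ?case
    proof (rule ccontr)
      assume not_eventually: "\<not> ?case"
      have bounded: "kseq S M Sstar a N \<le> K" for N
      proof (rule ccontr)
        assume "\<not> kseq S M Sstar a N \<le> K"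
        then have "Suc K \<le> kseq S M Sstar a N'" if "N \<le> N'" for N'
          using incseqD[OF incseq_kseq that, of S M Sstar a] by simp
        then have "\<forall>\<^sub>F N' in sequentially. Suc K \<le> kseq S M Sstar a N'"
          by (rule eventually_sequentiallyI)
        with not_eventually show False by simp
      qed
      have "1 \<le> K" using bounded[of 0] kseq_ge_1[of S M Sstar a 0] by simp
      have "\<forall>\<^sub>F N in sequentially. enough_neighbours S M Sstar N (K + 1) (a K)"
        using infill a_pos[OF \<open>1 \<le> K\<close>] by (rule eventually_enough_neighbours)
      then have "\<forall>\<^sub>F N in sequentially. K \<le> kseq S M Sstar a N \<and> 1 \<le> N \<and>
          enough_neighbours S M Sstar N (K + 1) (a K)"
        by (intro eventually_conj Suc.IH eventually_ge_at_top)
      then obtain N where N: "K \<le> kseq S M Sstar a N" "1 \<le> N" "enough_neighbours S M Sstar N (K + 1) (a K)"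
        by (auto dest: eventually_happens)
      have k: "kseq S M Sstar a N = K" using N(1) bounded[of N] by simp
      have "enough_neighbours S M Sstar (Suc N) (kseq S M Sstar a N + 1) (a (kseq S M Sstar a N))"
        unfolding k using N(3) by (rule enough_neighbours_mono) auto
      then have "kseq S M Sstar a (Suc N) = kseq S M Sstar a N + 1"
        by (rule kseq_Suc_eq_if_enough_neighbours[OF assms(1) N(2)])
      with bounded[of "Suc N"] k show False by simp
    qed
  qed
qed

lemma eventually_kseq_enough_neighbours:
  assumes "0 < M"
    and infill: "\<And>m V. m < M \<Longrightarrow> open V \<Longrightarrow> Sstar m \<in> V \<Longrightarrow> infinite {n. n \<ge> 1 \<and> S n \<in> V}"
    and a_pos: "\<And>t. t \<ge> 1 \<Longrightarrow> a t > 0" and a_lim: "a \<longlonglongrightarrow> 0"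
    and "0 < r"
  shows "\<forall>\<^sub>F N in sequentially. enough_neighbours S M Sstar N (kseq S M Sstar a N) r"
proof -
  obtain T where T: "\<And>t. T \<le> t \<Longrightarrow> a t < r"
    using order_tendstoD(2)[OF a_lim \<open>0 < r\<close>] by (auto simp: eventually_sequentially)
  have "\<forall>\<^sub>F N in sequentially. T + 2 \<le> kseq S M Sstar a N \<and> 1 \<le> N"
    using filterlim_kseq_at_top[OF assms(1) infill a_pos] eventually_ge_at_top[of 1]
    unfolding filterlim_at_top by (auto intro: eventually_conj)
  then show ?thesis
  proof (rule eventually_mono)
    fix N assume N: "T + 2 \<le> kseq S M Sstar a N \<and> 1 \<le> N"
    then have enough: "enough_neighbours S M Sstar N (kseq S M Sstar a N) (a (kseq S M Sstar a N - 1))"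
      by (intro kseq_enough_neighbours[OF assms(1)]) auto
    have "a (kseq S M Sstar a N - 1) \<le> r"
      using T[of "kseq S M Sstar a N - 1"] N by linarith
    then show "enough_neighbours S M Sstar N (kseq S M Sstar a N) r"
      by (rule enough_neighbours_mono[OF enough order_refl _ order_refl])
  qed
qed

section \<open>Nearest neighbours with tie-breaking\<close>

definition nn_rank :: "(nat \<Rightarrow> 's::metric_space) \<Rightarrow> (nat \<Rightarrow> real) \<Rightarrow> 's \<Rightarrow> nat \<Rightarrow> nat \<Rightarrow> nat" where
  "nn_rank S u s N n = card {j\<in>{1..N}. nn_before S u s j n}"

lemma nn_set_eq_rank: "nn_set S u s N k = {n\<in>{1..N}. nn_rank S u s N n < k}"
  by (simp add: nn_set_def nn_rank_def)

lemma nn_set_cong: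
  assumes "\<And>n. n \<in> {1..N} \<Longrightarrow> u n = u' n"
  shows "nn_set S u s N k = nn_set S u' s N k"
proof -
  have "nn_before S u s j n = nn_before S u' s j n" if "j \<in> {1..N}" "n \<in> {1..N}" for j n
    using assms that by (simp add: nn_before_def)
  then show ?thesis unfolding nn_set_def by (intro Collect_cong conj_cong refl arg_cong2[where f="(<)"] arg_cong[where f=card]) auto
qed

lemma nn_before_irrefl: "\<not> nn_before S u s n n"
  by (simp add: nn_before_def)

lemma nn_before_trans: "nn_before S u s i j \<Longrightarrow> nn_before S u s j n \<Longrightarrow> nn_before S u s i n"
  unfolding nn_before_def by (elim disjE conjE) auto

lemma nn_before_total: "j \<noteq> n \<Longrightarrow> nn_before S u s j n \<or> nn_before S u s n j"
  unfolding nn_before_def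
  using linorder_less_linear[of "dist s (S j)" "dist s (S n)"] linorder_less_linear[of "u j" "u n"]
    linorder_less_linear[of j n]
  by auto

lemma nn_rank_strict_mono:
  assumes "nn_before S u s n n'" "n \<in> {1..N}"
  shows "nn_rank S u s N n < nn_rank S u s N n'"
  unfolding nn_rank_def
proof (rule psubset_card_mono)
  show "{j\<in>{1..N}. nn_before S u s j n} \<subset> {j\<in>{1..N}. nn_before S u s j n'}"
    using assms nn_before_trans[OF _ assms(1)] nn_before_irrefl by blast
qed simp

lemma bij_betw_nn_rank: "bij_betw (nn_rank S u s N) {1..N} {..<N}"
proof -
  have inj: "inj_on (nn_rank S u s N) {1..N}"
  proof (rule inj_onI, rule ccontr)
    fix n n' assume "n \<in> {1..N}" "n' \<in> {1..N}" "nn_rank S u s N n = nn_rank S u s N n'" "n \<noteq> n'"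
    then show False using nn_before_total[of n n'] nn_rank_strict_mono[of S u s] by fastforce
  qed
  have "nn_rank S u s N n < N" if "n \<in> {1..N}" for n
  proof -
    have "nn_rank S u s N n \<le> card ({1..N} - {n})"
      unfolding nn_rank_def using nn_before_irrefl by (intro card_mono) auto
    then show ?thesis using that by (cases N) auto
  qed
  then have "nn_rank S u s N ` {1..N} \<subseteq> {..<N}" by auto
  moreover have "card (nn_rank S u s N ` {1..N}) = card {..<N}"
    using card_image[OF inj] by simp
  ultimately show ?thesis
    unfolding bij_betw_def using inj by (simp add: card_subset_eq)
qed

lemma nn_set_subset: "nn_set S u s N k \<subseteq> {1..N}"
  by (auto simp: nn_set_def)

lemma card_nn_set:
  assumes "k \<le> N"
  shows "card (nn_set S u s N k) = k"
proof -
  let ?R = "nn_rank S u s N"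
  have "?R ` nn_set S u s N k = {i\<in>?R ` {1..N}. i < k}"
    unfolding nn_set_eq_rank by blast
  also have "\<dots> = {..<k}"
    unfolding bij_betw_imp_surj_on[OF bij_betw_nn_rank] using assms by auto
  finally have "card (?R ` nn_set S u s N k) = k" by simp
  moreover have "inj_on ?R (nn_set S u s N k)"
    using bij_betw_imp_inj_on[OF bij_betw_nn_rank] nn_set_subset by (rule inj_on_subset)
  ultimately show ?thesis by (simp add: card_image)
qed

lemma dist_le_if_mem_nn_set:
  assumes "enough_neighbours S M Sstar N k r" "m < M" "n \<in> nn_set S u (Sstar m) N k"
  shows "dist (Sstar m) (S n) \<le> r"
proof (rule enough_neighbours_imp_dist_le[OF assms(1,2)])
  have "card {j\<in>{1..N}. dist (Sstar m) (S j) < dist (Sstar m) (S n)} \<le> nn_rank S u (Sstar m) N n"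
    unfolding nn_rank_def by (intro card_mono) (auto simp: nn_before_def)
  then show "card {j\<in>{1..N}. dist (Sstar m) (S j) < dist (Sstar m) (S n)} < k"
    using assms(3) by (simp add: nn_set_eq_rank)
qed

section \<open>Independent families and sums of variances\<close>

lemma (in prob_space) indep_sets_reindex:
  assumes "inj_on h I" "indep_sets F (h ` I)"
  shows "indep_sets (\<lambda>i. F (h i)) I"
  unfolding indep_sets_def
proof (intro conjI ballI allI impI)
  fix i assume "i \<in> I"
  then show "F (h i) \<subseteq> events" using assms(2) by (simp add: indep_sets_def)
next
  fix J A assume J: "J \<subseteq> I" "J \<noteq> {}" "finite J" and A: "A \<in> Pi J (\<lambda>i. F (h i))"
  define A' where "A' j' = A (the_inv_into J h j')" for j'
  have inj: "inj_on h J" using assms(1) J(1) by (rule inj_on_subset)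
  have A': "A' (h j) = A j" if "j \<in> J" for j
    unfolding A'_def using the_inv_into_f_f[OF inj that] by simp
  have "A' \<in> Pi (h ` J) F" using A A' by auto
  then have "prob (\<Inter>j'\<in>h ` J. A' j') = (\<Prod>j'\<in>h ` J. prob (A' j'))"
    using assms(2) J unfolding indep_sets_def by (meson image_is_empty image_mono finite_imageI)
  then show "prob (\<Inter>j\<in>J. A j) = (\<Prod>j\<in>J. prob (A j))"
    using A' by (simp add: prod.reindex[OF inj])
qed

lemma (in prob_space) indep_vars_reindex:
  assumes "inj_on h I" "indep_vars M' X (h ` I)"
  shows "indep_vars (\<lambda>i. M' (h i)) (\<lambda>i. X (h i)) I"
  using assms indep_sets_reindex[OF assms(1), of "\<lambda>i. {X i -` A \<inter> space M | A. A \<in> sets (M' i)}"]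
  unfolding indep_vars_def2 by auto

lemma (in prob_space) prob_indep_restrict:
  assumes "indep_vars (\<lambda>_. borel) X I" "A \<inter> B = {}" "A \<subseteq> I" "B \<subseteq> I"
    and "{x\<in>space (PiM A (\<lambda>_. borel)). P x} \<in> sets (PiM A (\<lambda>_. borel))"
    and "{x\<in>space (PiM B (\<lambda>_. borel)). Q x} \<in> sets (PiM B (\<lambda>_. borel))"
  shows "prob {\<omega>\<in>space M. P (\<lambda>i\<in>A. X i \<omega>) \<and> Q (\<lambda>i\<in>B. X i \<omega>)}
       = prob {\<omega>\<in>space M. P (\<lambda>i\<in>A. X i \<omega>)} * prob {\<omega>\<in>space M. Q (\<lambda>i\<in>B. X i \<omega>)}"
proof -
  have "prob ((\<lambda>\<omega>. ((\<lambda>i\<in>A. X i \<omega>), (\<lambda>i\<in>B. X i \<omega>))) -`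
          ({x\<in>space (PiM A (\<lambda>_. borel)). P x} \<times> {x\<in>space (PiM B (\<lambda>_. borel)). Q x}) \<inter> space M) =
        prob ((\<lambda>\<omega>. \<lambda>i\<in>A. X i \<omega>) -` {x\<in>space (PiM A (\<lambda>_. borel)). P x} \<inter> space M) *
        prob ((\<lambda>\<omega>. \<lambda>i\<in>B. X i \<omega>) -` {x\<in>space (PiM B (\<lambda>_. borel)). Q x} \<inter> space M)"
    by (rule indep_varD[OF indep_var_restrict[OF assms(1-4)] assms(5,6)])
  then show ?thesis by (simp add: space_PiM vimage_def Int_def conj_commute)
qed

lemma (in prob_space) variance_sum_indep:
  fixes Y :: "'i \<Rightarrow> 'a \<Rightarrow> real"
  assumes "finite T" and indep: "indep_vars (\<lambda>_. borel) Y T"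
    and sq: "\<And>n. n \<in> T \<Longrightarrow> integrable M (\<lambda>\<omega>. (Y n \<omega>)\<^sup>2)"
  shows "integrable M (\<lambda>\<omega>. (\<Sum>n\<in>T. Y n \<omega>)\<^sup>2)"
    and "variance (\<lambda>\<omega>. \<Sum>n\<in>T. Y n \<omega>) = (\<Sum>n\<in>T. variance (Y n))"
proof -
  have meas: "Y n \<in> borel_measurable M" if "n \<in> T" for n
    using indep that by (simp add: indep_vars_def)
  have int: "integrable M (Y n)" if "n \<in> T" for n
    using square_integrable_imp_integrable[OF meas[OF that] sq[OF that]] .
  have prod_int: "integrable M (\<lambda>\<omega>. (Y i \<omega> - c) * (Y j \<omega> - d))" if "i \<in> T" "j \<in> T" for i j c d
  proof (cases "i = j")
    case True
    have "(\<lambda>\<omega>. (Y i \<omega> - c) * (Y j \<omega> - d)) = (\<lambda>\<omega>. (Y i \<omega>)\<^sup>2 - (c + d) * Y i \<omega> + c * d)"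
      using True by (simp add: fun_eq_iff power2_eq_square algebra_simps)
    then show ?thesis using sq int that by simp
  next
    case False
    have "indep_vars (\<lambda>_. borel) (\<lambda>n \<omega>. Y n \<omega> - (if n = i then c else d)) {i, j}"
      by (rule indep_vars_compose2[OF indep_vars_subset[OF indep]]) (use that in auto)
    then have "integrable M (\<lambda>\<omega>. \<Prod>n\<in>{i, j}. Y n \<omega> - (if n = i then c else d))"
      by (rule indep_vars_integrable[rotated]) (use int that in auto)
    then show ?thesis using False by simp
  qed
  have cross: "expectation (\<lambda>\<omega>. (Y i \<omega> - expectation (Y i)) * (Y j \<omega> - expectation (Y j))) = 0"
    if "i \<in> T" "j \<in> T" "i \<noteq> j" for i j
  proof -
    have "indep_vars (\<lambda>_. borel) (\<lambda>n \<omega>. Y n \<omega> - expectation (Y n)) {i, j}"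
      by (rule indep_vars_compose2[OF indep_vars_subset[OF indep]]) (use that in auto)
    then have "expectation (\<lambda>\<omega>. \<Prod>n\<in>{i, j}. Y n \<omega> - expectation (Y n))
        = (\<Prod>n\<in>{i, j}. expectation (\<lambda>\<omega>. Y n \<omega> - expectation (Y n)))"
      by (rule indep_vars_lebesgue_integral[rotated]) (use int that in auto)
    then show ?thesis using that int prob_space by simp
  qed
  have sq_sum: "(\<Sum>n\<in>T. Y n \<omega> - c n)\<^sup>2 = (\<Sum>i\<in>T. \<Sum>j\<in>T. (Y i \<omega> - c i) * (Y j \<omega> - c j))" for \<omega> c
    by (simp add: power2_eq_square sum_product)
  show "integrable M (\<lambda>\<omega>. (\<Sum>n\<in>T. Y n \<omega>)\<^sup>2)"
    unfolding sq_sum[of _ "\<lambda>_. 0", simplified]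
    using prod_int[of _ _ 0 0] by (intro Bochner_Integration.integrable_sum) simp
  have "variance (\<lambda>\<omega>. \<Sum>n\<in>T. Y n \<omega>)
      = expectation (\<lambda>\<omega>. (\<Sum>n\<in>T. Y n \<omega> - expectation (Y n))\<^sup>2)"
    using int by (simp add: Bochner_Integration.integral_sum sum_subtractf)
  also have "\<dots> = (\<Sum>i\<in>T. \<Sum>j\<in>T. expectation (\<lambda>\<omega>. (Y i \<omega> - expectation (Y i)) * (Y j \<omega> - expectation (Y j))))"
    unfolding sq_sum using prod_int by (simp add: Bochner_Integration.integral_sum)
  also have "\<dots> = (\<Sum>i\<in>T. variance (Y i))"
  proof (rule sum.cong[OF refl])
    fix i assume "i \<in> T"
    have "(\<Sum>j\<in>T - {i}. expectation (\<lambda>\<omega>. (Y i \<omega> - expectation (Y i)) * (Y j \<omega> - expectation (Y j))))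
        = 0"
      by (rule sum.neutral) (use cross \<open>i \<in> T\<close> in blast)
    then show "(\<Sum>j\<in>T. expectation (\<lambda>\<omega>. (Y i \<omega> - expectation (Y i)) * (Y j \<omega> - expectation (Y j))))
        = variance (Y i)"
      using \<open>finite T\<close> \<open>i \<in> T\<close> by (simp add: sum.remove[of T i] power2_eq_square)
  qed
  finally show "variance (\<lambda>\<omega>. \<Sum>n\<in>T. Y n \<omega>) = (\<Sum>n\<in>T. variance (Y n))" .
qed

section \<open>Concentration of nearest-neighbour sums\<close>

lemma sets_Collect_card_less:
  fixes P :: "'i \<Rightarrow> 'a \<Rightarrow> bool"
  assumes "finite J" "\<And>j. j \<in> J \<Longrightarrow> {x\<in>space M. P j x} \<in> sets M"
  shows "{x\<in>space M. card {j\<in>J. P j x} < k} \<in> sets M"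
proof -
  have "(\<lambda>x. \<Sum>j\<in>J. indicator {x\<in>space M. P j x} x :: real) \<in> borel_measurable M"
    using assms(2) by (intro borel_measurable_sum borel_measurable_indicator)
  then have "{x\<in>space M. (\<Sum>j\<in>J. indicator {x\<in>space M. P j x} x :: real) < real k} \<in> sets M"
    by measurable
  also have "{x\<in>space M. (\<Sum>j\<in>J. indicator {x\<in>space M. P j x} x :: real) < real k}
      = {x\<in>space M. card {j\<in>J. P j x} < k}"
    using assms(1) by (auto simp: indicator_def sum.If_cases Int_def)
  finally show ?thesis .
qed

lemma sets_Collect_nn_set_eq:
  fixes S :: "nat \<Rightarrow> 's::metric_space"
  assumes u: "\<And>n. n \<in> {1..N} \<Longrightarrow> (\<lambda>x. u x n) \<in> borel_measurable M"
  shows "{x\<in>space M. nn_set S (u x) s N k = T} \<in> sets M"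
proof -
  have before: "{x\<in>space M. nn_before S (u x) s j n} \<in> sets M" if "j \<in> {1..N}" "n \<in> {1..N}" for j n
  proof -
    note [measurable] = u[OF that(1)] u[OF that(2)]
    show ?thesis unfolding nn_before_def by measurable
  qed
  have rank: "Measurable.pred M (\<lambda>x. nn_rank S (u x) s N n < k)" if "n \<in> {1..N}" for n
    unfolding nn_rank_def pred_def using before that by (intro sets_Collect_card_less) auto
  have "Measurable.pred M (\<lambda>x. T \<subseteq> {1..N} \<and> (\<forall>n\<in>{1..N}. (n \<in> T) = (nn_rank S (u x) s N n < k)))"
    using rank by measurable
  moreover have "nn_set S (u x) s N k = T \<longleftrightarrow>
      T \<subseteq> {1..N} \<and> (\<forall>n\<in>{1..N}. (n \<in> T) = (nn_rank S (u x) s N n < k))" for x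
    unfolding nn_set_eq_rank by auto
  ultimately show ?thesis by (simp add: pred_def)
qed

lemma (in prob_space) prob_abs_sum_centered_ge:
  fixes Y :: "'i \<Rightarrow> 'a \<Rightarrow> real"
  assumes "finite T" "indep_vars (\<lambda>_. borel) Y T"
    and sq: "\<And>n. n \<in> T \<Longrightarrow> integrable M (\<lambda>\<omega>. (Y n \<omega>)\<^sup>2)"
    and var: "\<And>n. n \<in> T \<Longrightarrow> variance (Y n) \<le> B" and "0 < c"
  shows "prob {\<omega>\<in>space M. c \<le> \<bar>\<Sum>n\<in>T. Y n \<omega> - expectation (Y n)\<bar>} \<le> real (card T) * B / c\<^sup>2"
proof -
  have meas: "Y n \<in> borel_measurable M" if "n \<in> T" for n
    using assms(2) that by (simp add: indep_vars_def)
  have int: "integrable M (Y n)" if "n \<in> T" for n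
    using square_integrable_imp_integrable[OF meas[OF that] sq[OF that]] .
  have "expectation (\<lambda>\<omega>. \<Sum>n\<in>T. Y n \<omega>) = (\<Sum>n\<in>T. expectation (Y n))"
    using int by (simp add: Bochner_Integration.integral_sum)
  then have "prob {\<omega>\<in>space M. c \<le> \<bar>\<Sum>n\<in>T. Y n \<omega> - expectation (Y n)\<bar>}
      \<le> variance (\<lambda>\<omega>. \<Sum>n\<in>T. Y n \<omega>) / c\<^sup>2"
    using Chebyshev_inequality[of "\<lambda>\<omega>. \<Sum>n\<in>T. Y n \<omega>" c]
      variance_sum_indep(1)[OF assms(1,2) sq] meas \<open>0 < c\<close> by (simp add: sum_subtractf)
  also have "\<dots> = (\<Sum>n\<in>T. variance (Y n)) / c\<^sup>2"
    using variance_sum_indep(2)[OF assms(1,2) sq] by simp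
  also have "\<dots> \<le> real (card T) * B / c\<^sup>2"
    using var sum_mono[of T "\<lambda>n. variance (Y n)" "\<lambda>_. B"] by (simp add: divide_right_mono)
  finally show ?thesis .
qed

lemma (in prob_space) prob_nn_sum_deviation:
  fixes Y U :: "nat \<Rightarrow> 'a \<Rightarrow> real" and S :: "nat \<Rightarrow> 's::metric_space" and s :: 's
    and N k :: nat and B c :: real
  assumes indep: "indep_vars (\<lambda>_. borel) (case_sum Y U) (Inl ` {1..N} \<union> Inr ` {1..N})"
    and sq: "\<And>n. n \<in> {1..N} \<Longrightarrow> integrable M (\<lambda>\<omega>. (Y n \<omega>)\<^sup>2)"
    and var: "\<And>n. n \<in> {1..N} \<Longrightarrow> variance (Y n) \<le> B"
    and "0 \<le> B" "k \<le> N" "0 < c"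
  defines "D \<equiv> {\<omega>\<in>space M. c \<le> \<bar>\<Sum>n\<in>nn_set S (\<lambda>n. U n \<omega>) s N k. Y n \<omega> - expectation (Y n)\<bar>}"
  shows "D \<in> events" and "prob D \<le> k * B / c\<^sup>2"
proof -
  txt \<open>Condition on the selected set \<open>T\<close>: the event \<open>E T\<close> depends only on the labels, the
    deviation event \<open>C T\<close> only on the responses indexed by \<open>T\<close>.\<close>
  define E where "E T = {\<omega>\<in>space M. nn_set S (\<lambda>n. U n \<omega>) s N k = T}" for T
  define C where "C T = {\<omega>\<in>space M. c \<le> \<bar>\<Sum>n\<in>T. Y n \<omega> - expectation (Y n)\<bar>}" for T
  have meas: "case_sum Y U i \<in> borel_measurable M" if "i \<in> Inl ` {1..N} \<union> Inr ` {1..N}" for i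
    using indep that by (simp add: indep_vars_def)
  have U_meas: "U n \<in> borel_measurable M" if "n \<in> {1..N}" for n
    using meas[of "Inr n"] that by simp
  have E_sets: "E T \<in> events" for T
    unfolding E_def by (rule sets_Collect_nn_set_eq) (rule U_meas)
  have C_sets: "C T \<in> events" if "T \<subseteq> {1..N}" for T
  proof -
    have "Y n \<in> borel_measurable M" if "n \<in> T" for n
      using meas[of "Inl n"] that \<open>T \<subseteq> {1..N}\<close> by auto
    then have "(\<lambda>\<omega>. \<bar>\<Sum>n\<in>T. Y n \<omega> - expectation (Y n)\<bar>) \<in> borel_measurable M"
      by (intro borel_measurable_abs borel_measurable_sum borel_measurable_diff borel_measurable_const)
    then show ?thesis unfolding C_def by (intro borel_measurable_le borel_measurable_const)
  qed
  have D_eq: "D = (\<Union>T\<in>Pow {1..N}. E T \<inter> C T)"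
  proof (intro equalityI subsetI)
    fix \<omega> assume "\<omega> \<in> D"
    then have "\<omega> \<in> E (nn_set S (\<lambda>n. U n \<omega>) s N k) \<inter> C (nn_set S (\<lambda>n. U n \<omega>) s N k)"
      by (simp add: D_def E_def C_def)
    moreover have "nn_set S (\<lambda>n. U n \<omega>) s N k \<in> Pow {1..N}" using nn_set_subset by simp
    ultimately show "\<omega> \<in> (\<Union>T\<in>Pow {1..N}. E T \<inter> C T)" by (rule UN_I[rotated])
  next
    fix \<omega> assume "\<omega> \<in> (\<Union>T\<in>Pow {1..N}. E T \<inter> C T)"
    then obtain T where "\<omega> \<in> E T \<inter> C T" by (rule UN_E)
    then show "\<omega> \<in> D" unfolding D_def E_def C_def by simp
  qed
  show "D \<in> events" unfolding D_eq using E_sets C_sets by (intro sets.finite_UN sets.Int) auto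
  have "prob (E T \<inter> C T) \<le> prob (E T) * (k * B / c\<^sup>2)" if "T \<subseteq> {1..N}" for T
  proof (cases "card T = k")
    case True
    have "prob (E T \<inter> C T) = prob (E T) * prob (C T)"
    proof -
      let ?A = "Inr ` {1..N}" and ?B = "Inl ` T"
      let ?P = "\<lambda>x. nn_set S (\<lambda>n. x (Inr n)) s N k = T"
      let ?Q = "\<lambda>x. c \<le> \<bar>\<Sum>n\<in>T. x (Inl n) - expectation (Y n)\<bar>"
      have "nn_set S (\<lambda>n. (\<lambda>i\<in>?A. case_sum Y U i \<omega>) (Inr n)) s N k = nn_set S (\<lambda>n. U n \<omega>) s N k"
        for \<omega> by (rule nn_set_cong) simp
      then have E: "E T = {\<omega>\<in>space M. ?P (\<lambda>i\<in>?A. case_sum Y U i \<omega>)}"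
        unfolding E_def by simp
      have C: "C T = {\<omega>\<in>space M. ?Q (\<lambda>i\<in>?B. case_sum Y U i \<omega>)}"
        unfolding C_def by simp
      have "{x\<in>space (PiM ?A (\<lambda>_. borel)). ?P x} \<in> sets (PiM ?A (\<lambda>_. borel))"
        by (intro sets_Collect_nn_set_eq measurable_component_singleton) auto
      moreover have "{x\<in>space (PiM ?B (\<lambda>_. borel)). ?Q x} \<in> sets (PiM ?B (\<lambda>_. borel))"
        by measurable
      ultimately have "prob {\<omega>\<in>space M. ?P (\<lambda>i\<in>?A. case_sum Y U i \<omega>) \<and> ?Q (\<lambda>i\<in>?B. case_sum Y U i \<omega>)}
          = prob (E T) * prob (C T)"
        unfolding E C using that by (intro prob_indep_restrict[OF indep]) auto
      moreover have "E T \<inter> C T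
          = {\<omega>\<in>space M. ?P (\<lambda>i\<in>?A. case_sum Y U i \<omega>) \<and> ?Q (\<lambda>i\<in>?B. case_sum Y U i \<omega>)}"
        unfolding E C by blast
      ultimately show ?thesis by simp
    qed
    also have "\<dots> \<le> prob (E T) * (k * B / c\<^sup>2)"
    proof (intro mult_left_mono)
      have "indep_vars (\<lambda>_. borel) (\<lambda>n. case_sum Y U (Inl n)) T"
        using indep_vars_reindex[of Inl T, OF _ indep_vars_subset[OF indep]] that by auto
      then show "prob (C T) \<le> k * B / c\<^sup>2"
        unfolding C_def using True that sq var \<open>0 < c\<close> finite_subset[OF that]
        by (intro order_trans[OF prob_abs_sum_centered_ge]) auto
    qed simp
    finally show ?thesis .
  next
    case False
    then have "E T = {}" unfolding E_def using card_nn_set[OF \<open>k \<le> N\<close>] by auto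
    then show ?thesis by simp
  qed
  then have "prob D \<le> (\<Sum>T\<in>Pow {1..N}. prob (E T) * (k * B / c\<^sup>2))"
    unfolding D_eq using E_sets C_sets
    by (intro order_trans[OF finite_measure_subadditive_finite sum_mono]) auto
  also have "\<dots> = prob (\<Union>T\<in>Pow {1..N}. E T) * (k * B / c\<^sup>2)"
    using E_sets by (subst finite_measure_finite_Union)
      (auto simp: sum_distrib_right sum_divide_distrib disjoint_family_on_def E_def)
  also have "\<dots> \<le> k * B / c\<^sup>2"
    using \<open>0 \<le> B\<close> by (intro mult_left_le_one_le) auto
  finally show "prob D \<le> k * B / c\<^sup>2" .
qed

lemma nn_sum_deviation_if_nn_avg_deviation:
  fixes S :: "nat \<Rightarrow> 's::metric_space"
  assumes lip: "\<And>s s'. \<bar>f s - f s'\<bar> \<le> L * dist s s'" and "0 \<le> L" "2 * L * r \<le> \<theta>"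
    and near: "enough_neighbours S M Sstar N k r" and "m < M" "0 < k" "k \<le> N"
    and dev: "\<theta> < \<bar>nn_avg S u Sstar N k y m - f (Sstar m)\<bar>"
  shows "k * \<theta> / 2 \<le> \<bar>\<Sum>n\<in>nn_set S u (Sstar m) N k. y n - f (S n)\<bar>"
proof -
  let ?T = "nn_set S u (Sstar m) N k"
  have card: "card ?T = k" using card_nn_set[OF \<open>k \<le> N\<close>] .
  have "\<bar>\<Sum>n\<in>?T. f (S n) - f (Sstar m)\<bar> \<le> (\<Sum>n\<in>?T. \<bar>f (S n) - f (Sstar m)\<bar>)" by (rule sum_abs)
  also have "\<dots> \<le> (\<Sum>n\<in>?T. \<theta> / 2)"
  proof (rule sum_mono)
    fix n assume "n \<in> ?T"
    then have "dist (S n) (Sstar m) \<le> r"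
      using dist_le_if_mem_nn_set[OF near \<open>m < M\<close>] by (simp add: dist_commute)
    then have "L * dist (S n) (Sstar m) \<le> L * r" using \<open>0 \<le> L\<close> by (rule mult_left_mono)
    then show "\<bar>f (S n) - f (Sstar m)\<bar> \<le> \<theta> / 2" using lip[of "S n" "Sstar m"] assms(3) by linarith
  qed
  finally have bias: "\<bar>\<Sum>n\<in>?T. f (S n) - f (Sstar m)\<bar> \<le> k * \<theta> / 2" using card by simp
  have "nn_avg S u Sstar N k y m - f (Sstar m) = ((\<Sum>n\<in>?T. y n) - k * f (Sstar m)) / k"
    unfolding nn_avg_def using \<open>0 < k\<close> by (simp add: diff_divide_distrib)
  then have "\<theta> < \<bar>(\<Sum>n\<in>?T. y n) - k * f (Sstar m)\<bar> / k" using dev by simp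
  then have "k * \<theta> < \<bar>(\<Sum>n\<in>?T. y n) - k * f (Sstar m)\<bar>"
    using \<open>0 < k\<close> by (simp add: pos_less_divide_eq mult.commute)
  also have "(\<Sum>n\<in>?T. y n) - k * f (Sstar m) = (\<Sum>n\<in>?T. y n - f (S n)) + (\<Sum>n\<in>?T. f (S n) - f (Sstar m))"
    using card by (simp add: sum_subtractf)
  finally show ?thesis using bias by linarith
qed

section \<open>Consistency of the adaptive nearest-neighbour estimator\<close>

lemma (in prob_space) indep_vars_forget_middle:
  assumes "indep_vars (\<lambda>_. borel) (\<lambda>i. case i of Inl n \<Rightarrow> Y n | Inr (Inl m) \<Rightarrow> Z m | Inr (Inr n) \<Rightarrow> U n) I"
    and "Inl ` A \<union> Inr ` Inr ` C \<subseteq> I"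
  shows "indep_vars (\<lambda>_. borel) (case_sum Y U) (Inl ` A \<union> Inr ` C)"
proof -
  let ?h = "map_sum id Inr :: 'i + 'j \<Rightarrow> 'i + 'k + 'j"
  have "inj_on ?h (Inl ` A \<union> Inr ` C)" by (auto simp: inj_on_def)
  moreover have "indep_vars (\<lambda>_. borel)
      (\<lambda>i. case i of Inl n \<Rightarrow> Y n | Inr (Inl m) \<Rightarrow> Z m | Inr (Inr n) \<Rightarrow> U n) (?h ` (Inl ` A \<union> Inr ` C))"
    using indep_vars_subset[OF assms] by (simp add: image_Un image_image)
  ultimately have "indep_vars (\<lambda>_. borel)
      (\<lambda>i. case ?h i of Inl n \<Rightarrow> Y n | Inr (Inl m) \<Rightarrow> Z m | Inr (Inr n) \<Rightarrow> U n) (Inl ` A \<union> Inr ` C)"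
    by (rule indep_vars_reindex)
  then show ?thesis by (rule iffD1[OF indep_vars_cong, rotated 3]) (auto split: sum.split)
qed

lemma (in prob_space) prob_nn_avg_deviation:
  fixes Y U :: "nat \<Rightarrow> 'a \<Rightarrow> real" and S :: "nat \<Rightarrow> 's::metric_space"
  assumes indep: "indep_vars (\<lambda>_. borel) (case_sum Y U) (Inl ` {1..N} \<union> Inr ` {1..N})"
    and sq: "\<And>n. n \<in> {1..N} \<Longrightarrow> integrable M (\<lambda>\<omega>. (Y n \<omega>)\<^sup>2)"
    and mean: "\<And>n. n \<in> {1..N} \<Longrightarrow> expectation (Y n) = f (S n)"
    and var: "\<And>n. n \<in> {1..N} \<Longrightarrow> variance (Y n) \<le> B" and "0 \<le> B"
    and lip: "\<And>s s'. \<bar>f s - f s'\<bar> \<le> L * dist s s'" and "0 \<le> L" "2 * L * r \<le> \<theta>" "0 < \<theta>"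
    and near: "enough_neighbours S J Sstar N k r" and "0 < k" "k \<le> N"
  shows "\<exists>A\<in>events. {\<omega>\<in>space M. \<exists>m<J. \<theta> < \<bar>nn_avg S (\<lambda>n. U n \<omega>) Sstar N k (\<lambda>n. Y n \<omega>) m - f (Sstar m)\<bar>} \<subseteq> A
      \<and> prob A \<le> 4 * real J * B / (k * \<theta>\<^sup>2)"
proof -
  define D where "D m = {\<omega>\<in>space M. k * \<theta> / 2 \<le> \<bar>\<Sum>n\<in>nn_set S (\<lambda>n. U n \<omega>) (Sstar m) N k. Y n \<omega> - expectation (Y n)\<bar>}" for m
  have "0 < k * \<theta> / 2" using \<open>0 < k\<close> \<open>0 < \<theta>\<close> by simp
  note deviation = prob_nn_sum_deviation[OF indep sq var \<open>0 \<le> B\<close> \<open>k \<le> N\<close> this, where S=S]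
  have D_events: "D m \<in> events" for m unfolding D_def by (rule deviation(1))
  have D_prob: "prob (D m) \<le> k * B / (k * \<theta> / 2)\<^sup>2" for m unfolding D_def by (rule deviation(2))
  show ?thesis
  proof (intro bexI conjI)
    show "(\<Union>m<J. D m) \<in> events" using D_events by (intro sets.finite_UN) auto
    show "{\<omega>\<in>space M. \<exists>m<J. \<theta> < \<bar>nn_avg S (\<lambda>n. U n \<omega>) Sstar N k (\<lambda>n. Y n \<omega>) m - f (Sstar m)\<bar>} \<subseteq> (\<Union>m<J. D m)"
    proof safe
      fix \<omega> m assume "\<omega> \<in> space M" "m < J"
        and "\<theta> < \<bar>nn_avg S (\<lambda>n. U n \<omega>) Sstar N k (\<lambda>n. Y n \<omega>) m - f (Sstar m)\<bar>"
      then have "k * \<theta> / 2 \<le> \<bar>\<Sum>n\<in>nn_set S (\<lambda>n. U n \<omega>) (Sstar m) N k. Y n \<omega> - f (S n)\<bar>"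
        using assms(7-12) by (intro nn_sum_deviation_if_nn_avg_deviation[OF lip]) auto
      moreover have "(\<Sum>n\<in>nn_set S (\<lambda>n. U n \<omega>) (Sstar m) N k. Y n \<omega> - f (S n))
          = (\<Sum>n\<in>nn_set S (\<lambda>n. U n \<omega>) (Sstar m) N k. Y n \<omega> - expectation (Y n))"
      proof (rule sum.cong[OF refl])
        fix n assume "n \<in> nn_set S (\<lambda>n. U n \<omega>) (Sstar m) N k"
        then have "n \<in> {1..N}" using nn_set_subset by blast
        then show "Y n \<omega> - f (S n) = Y n \<omega> - expectation (Y n)" by (simp add: mean)
      qed
      ultimately show "\<omega> \<in> (\<Union>m<J. D m)" using \<open>\<omega> \<in> space M\<close> \<open>m < J\<close> by (auto simp: D_def)
    qed
    have "prob (\<Union>m<J. D m) \<le> (\<Sum>m<J. prob (D m))"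
      using D_events by (intro finite_measure_subadditive_finite) auto
    also have "\<dots> \<le> (\<Sum>m<J. k * B / (k * \<theta> / 2)\<^sup>2)" using D_prob by (intro sum_mono)
    also have "\<dots> = 4 * real J * B / (k * \<theta>\<^sup>2)" using \<open>0 < k\<close> by (simp add: power2_eq_square field_simps)
    finally show "prob (\<Union>m<J. D m) \<le> 4 * real J * B / (k * \<theta>\<^sup>2)" .
  qed
qed

theorem theorem1:
  fixes \<Omega> :: "'w measure"
    and S :: "nat \<Rightarrow> 's::metric_space" and Sstar :: "nat \<Rightarrow> 's" and M :: nat
    and chi :: "'s \<Rightarrow> real ^ 'p"
    and Y :: "nat \<Rightarrow> 'w \<Rightarrow> real" and Ystar :: "nat \<Rightarrow> 'w \<Rightarrow> real"
    and U :: "nat \<Rightarrow> 'w \<Rightarrow> real"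
    and f :: "'s \<Rightarrow> real" and L :: real and \<rho>2 :: "'s \<Rightarrow> real" and BY :: real
    and \<kappa> :: "real \<Rightarrow> real" and \<beta>star :: "real ^ 'p"
    and a :: "nat \<Rightarrow> real"
  assumes prob: "prob_space \<Omega>"
    and M_pos: "0 < M"
    (* measurability and finite second moments of the responses *)
    and Y_meas: "\<And>n. n \<ge> 1 \<Longrightarrow> Y n \<in> borel_measurable \<Omega>"
    and Ystar_meas: "\<And>m. m < M \<Longrightarrow> Ystar m \<in> borel_measurable \<Omega>"
    and Y_int: "\<And>n. n \<ge> 1 \<Longrightarrow> integrable \<Omega> (Y n) \<and> integrable \<Omega> (\<lambda>\<omega>. (Y n \<omega>)\<^sup>2)"
    and Ystar_int: "\<And>m. m < M \<Longrightarrow> integrable \<Omega> (Ystar m) \<and> integrable \<Omega> (\<lambda>\<omega>. (Ystar m \<omega>)\<^sup>2)"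
    (* (A2) means and mutual independence; the tie-breaking labels U_n are iid uniform
       on [0,1] and independent of the responses *)
    and A2_mean: "\<And>n. n \<ge> 1 \<Longrightarrow> prob_space.expectation \<Omega> (Y n) = f (S n)"
    and A2_mean_star: "\<And>m. m < M \<Longrightarrow> prob_space.expectation \<Omega> (Ystar m) = f (Sstar m)"
    and A2_indep: "prob_space.indep_vars \<Omega> (\<lambda>_. borel)
        (\<lambda>i. case i of Inl n \<Rightarrow> Y n | Inr (Inl m) \<Rightarrow> Ystar m | Inr (Inr n) \<Rightarrow> U n)
        (Inl ` {1..} \<union> Inr ` Inl ` {..<M} \<union> Inr ` Inr ` {1..})"
    and U_unif: "\<And>n. n \<ge> 1 \<Longrightarrow> distr \<Omega> borel (U n) = uniform_measure lborel {0..1}"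
    (* (A3) *)
    and A3: "\<And>s s'. \<bar>f s - f s'\<bar> \<le> L * dist s s'"
    (* (A4) *)
    and A4_range: "\<And>s. 0 \<le> \<rho>2 s \<and> \<rho>2 s \<le> BY"
    and A4_var: "\<And>n. n \<ge> 1 \<Longrightarrow> prob_space.variance \<Omega> (Y n) = \<rho>2 (S n)"
    and A4_var_star: "\<And>m. m < M \<Longrightarrow> prob_space.variance \<Omega> (Ystar m) = \<rho>2 (Sstar m)"
    (* kappa: cumulant function of a natural exponential family, convex, C^\<infinity> *)
    and kappa_cumulant: "\<exists>\<nu>::real measure. sets \<nu> = sets borel \<and>
        (\<forall>\<theta>. (\<integral>\<^sup>+ y. ennreal (exp (\<theta> * y)) \<partial>\<nu>) = ennreal (exp (\<kappa> \<theta>)))"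
    and kappa_convex: "convex_on UNIV \<kappa>"
    and kappa_smooth: "\<And>j x. ((deriv ^^ j) \<kappa>) differentiable (at x)"
    (* (A7) *)
    and A7_max: "\<And>\<beta>. glm_obj \<kappa> M (\<lambda>m. chi (Sstar m)) (\<lambda>m. f (Sstar m)) \<beta>
                   \<le> glm_obj \<kappa> M (\<lambda>m. chi (Sstar m)) (\<lambda>m. f (Sstar m)) \<beta>star"
    and A7_strict: "\<exists>V. open V \<and> \<beta>star \<in> V \<and>
        strictly_concave_on V (glm_obj \<kappa> M (\<lambda>m. chi (Sstar m)) (\<lambda>m. f (Sstar m)))"
    (* infill asymptotics *)
    and infill: "\<And>m V. m < M \<Longrightarrow> open V \<Longrightarrow> Sstar m \<in> V \<Longrightarrow> infinite {n. n \<ge> 1 \<and> S n \<in> V}"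
    (* the sequence (a_t) *)
    and a_pos: "\<And>t. t \<ge> 1 \<Longrightarrow> a t > 0"
    and a_lim: "a \<longlonglongrightarrow> 0"
  shows "\<forall>\<epsilon>>0. \<forall>\<delta>>0. \<exists>N0. \<forall>N\<ge>N0. \<exists>A\<in>sets \<Omega>.
           {\<omega>\<in>space \<Omega>. dist (tau \<kappa> M (\<lambda>m. chi (Sstar m))
               (nn_avg S (\<lambda>n. U n \<omega>) Sstar N (kseq S M Sstar a N) (\<lambda>n. Y n \<omega>))) \<beta>star > \<epsilon>} \<subseteq> A
           \<and> measure \<Omega> A < \<delta>"
proof (intro allI impI)
  fix \<epsilon> \<delta> :: real assume "0 < \<epsilon>" "0 < \<delta>"
  interpret prob_space \<Omega> by (rule prob)
  have "continuous_on UNIV \<kappa>"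
    using kappa_smooth[of 0] by (auto intro: continuous_at_imp_continuous_on differentiable_imp_continuous_within)
  then obtain \<theta> where "0 < \<theta>" and tau_close:
    "\<And>A. \<forall>m<M. \<bar>A m - f (Sstar m)\<bar> \<le> \<theta> \<Longrightarrow> dist (tau \<kappa> M (\<lambda>m. chi (Sstar m)) A) \<beta>star < \<epsilon>"
    using tau_stable[OF kappa_convex _ A7_max A7_strict \<open>0 < \<epsilon>\<close>] by blast
  define r where "r = \<theta> / (2 * (\<bar>L\<bar> + 1))"
  have "0 < r" "2 * \<bar>L\<bar> * r \<le> \<theta>" using \<open>0 < \<theta>\<close> by (auto simp: r_def field_simps)
  have lip: "\<bar>f s - f s'\<bar> \<le> \<bar>L\<bar> * dist s s'" for s s'
    using A3[of s s'] mult_right_mono[OF abs_ge_self zero_le_dist] by (rule order_trans)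
  obtain K :: nat where K: "4 * real M * BY / (\<theta>\<^sup>2 * \<delta>) < K" using reals_Archimedean2 by blast
  have near: "\<forall>\<^sub>F N in sequentially. enough_neighbours S M Sstar N (kseq S M Sstar a N) r"
    using M_pos infill a_pos a_lim \<open>0 < r\<close> by (rule eventually_kseq_enough_neighbours)
  have "filterlim (kseq S M Sstar a) at_top sequentially"
    using M_pos infill a_pos by (rule filterlim_kseq_at_top)
  then have "\<forall>\<^sub>F N in sequentially. max K 1 \<le> kseq S M Sstar a N"
    unfolding filterlim_at_top by (rule spec)
  then have "\<forall>\<^sub>F N in sequentially. enough_neighbours S M Sstar N (kseq S M Sstar a N) r \<and>
      max K 1 \<le> kseq S M Sstar a N \<and> 1 \<le> N"
    by (intro eventually_conj near eventually_ge_at_top)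
  then obtain N0 where N0: "\<And>N. N0 \<le> N \<Longrightarrow> enough_neighbours S M Sstar N (kseq S M Sstar a N) r \<and>
      max K 1 \<le> kseq S M Sstar a N \<and> 1 \<le> N"
    by (auto simp: eventually_sequentially)
  show "\<exists>N0. \<forall>N\<ge>N0. \<exists>A\<in>sets \<Omega>.
           {\<omega>\<in>space \<Omega>. dist (tau \<kappa> M (\<lambda>m. chi (Sstar m))
               (nn_avg S (\<lambda>n. U n \<omega>) Sstar N (kseq S M Sstar a N) (\<lambda>n. Y n \<omega>))) \<beta>star > \<epsilon>} \<subseteq> A
           \<and> measure \<Omega> A < \<delta>"
  proof (intro exI[of _ N0] allI impI)
    fix N assume "N0 \<le> N"
    define k where "k = kseq S M Sstar a N"
    have near: "enough_neighbours S M Sstar N k r" and "max K 1 \<le> k" "k \<le> N"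
      using N0[OF \<open>N0 \<le> N\<close>] kseq_le[of N] by (auto simp: k_def)
    have indep: "indep_vars (\<lambda>_. borel) (case_sum Y U) (Inl ` {1..N} \<union> Inr ` {1..N})"
      by (rule indep_vars_forget_middle[OF A2_indep]) auto
    have sq: "integrable \<Omega> (\<lambda>\<omega>. (Y n \<omega>)\<^sup>2)" and mean: "expectation (Y n) = f (S n)"
      and var: "variance (Y n) \<le> BY" if "n \<in> {1..N}" for n
      using Y_int[of n] A2_mean[of n] A4_var[of n] A4_range[of "S n"] that by auto
    have "0 \<le> BY" "0 < k" using A4_range[of "Sstar 0"] \<open>max K 1 \<le> k\<close> by auto
    have "\<exists>A\<in>events. {\<omega>\<in>space \<Omega>. \<exists>m<M. \<theta> < \<bar>nn_avg S (\<lambda>n. U n \<omega>) Sstar N k (\<lambda>n. Y n \<omega>) m - f (Sstar m)\<bar>}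
        \<subseteq> A \<and> prob A \<le> 4 * real M * BY / (k * \<theta>\<^sup>2)"
      by (rule prob_nn_avg_deviation[OF indep sq mean var \<open>0 \<le> BY\<close> lip abs_ge_zero \<open>2 * \<bar>L\<bar> * r \<le> \<theta>\<close> \<open>0 < \<theta>\<close>
            near \<open>0 < k\<close> \<open>k \<le> N\<close>])
    then obtain A where A: "A \<in> events"
      "{\<omega>\<in>space \<Omega>. \<exists>m<M. \<theta> < \<bar>nn_avg S (\<lambda>n. U n \<omega>) Sstar N k (\<lambda>n. Y n \<omega>) m - f (Sstar m)\<bar>} \<subseteq> A"
      "prob A \<le> 4 * real M * BY / (k * \<theta>\<^sup>2)"
      by blast
    show "\<exists>A\<in>sets \<Omega>. {\<omega>\<in>space \<Omega>. dist (tau \<kappa> M (\<lambda>m. chi (Sstar m))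
               (nn_avg S (\<lambda>n. U n \<omega>) Sstar N (kseq S M Sstar a N) (\<lambda>n. Y n \<omega>))) \<beta>star > \<epsilon>} \<subseteq> A
           \<and> measure \<Omega> A < \<delta>"
    proof (intro bexI[OF _ A(1)] conjI subsetI)
      fix \<omega> assume "\<omega> \<in> {\<omega>\<in>space \<Omega>. dist (tau \<kappa> M (\<lambda>m. chi (Sstar m))
               (nn_avg S (\<lambda>n. U n \<omega>) Sstar N (kseq S M Sstar a N) (\<lambda>n. Y n \<omega>))) \<beta>star > \<epsilon>}"
      then have "\<omega> \<in> space \<Omega>" and far: "\<epsilon> < dist (tau \<kappa> M (\<lambda>m. chi (Sstar m))
          (nn_avg S (\<lambda>n. U n \<omega>) Sstar N k (\<lambda>n. Y n \<omega>))) \<beta>star"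
        by (simp_all add: k_def)
      have "\<not> (\<forall>m<M. \<bar>nn_avg S (\<lambda>n. U n \<omega>) Sstar N k (\<lambda>n. Y n \<omega>) m - f (Sstar m)\<bar> \<le> \<theta>)"
        using tau_close far by fastforce
      then show "\<omega> \<in> A" using A(2) \<open>\<omega> \<in> space \<Omega>\<close> by (auto simp: not_le)
    next
      have "4 * real M * BY < K * (\<theta>\<^sup>2 * \<delta>)" using K \<open>0 < \<theta>\<close> \<open>0 < \<delta>\<close> by (simp add: divide_less_eq)
      also have "\<dots> \<le> k * (\<theta>\<^sup>2 * \<delta>)" using \<open>max K 1 \<le> k\<close> \<open>0 < \<delta>\<close> by (intro mult_right_mono) auto
      finally have "4 * real M * BY / (k * \<theta>\<^sup>2) < \<delta>"
        using \<open>max K 1 \<le> k\<close> \<open>0 < \<theta>\<close> by (simp add: divide_less_eq algebra_simps)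
      then show "measure \<Omega> A < \<delta>" using A(3) by simp
    qed
  qed
qed

end
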